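(* Under the standing assumptions on $f$, let $\ell>0$, $\beta=\ell d$, let $x_1,\dots,x_d$ be i.i.d. with density $f^\beta/N(\beta)$ and, independently, $y_1,\dots,y_d$ i.i.d. $N(0,(\beta|H|)^{-1})$. Define the Taylor remainder $$R(z):=h(z)-h(0)-\frac{H}{2}z^2-\frac{h'''(0)}{6}z^3-\frac{h''''(0)}{24}z^4$$ (so $R(z)=\frac{z^5}{120}h^{(5)}(\xi_z)$ for some $\xi_z$ between $0$ and $z$). Then $$T_2(d):=\beta\sum_{i=1}^d\big(R(y_i)-R(x_i)\big)\to0\quad\text{in probability as }d\to\infty.$$
   Context: Standing assumptions: $f:\mathbb{R}\to(0,\infty)$ is an unnormalised univariate density with $f\in C^5$, $f(0)=1$, $f'(0)=0$, and $0$ is the unique global maximiser of $f$. Let $h:=\log f$ and $H:=h''(0)$, assumed $H<0$; there is $L>0$ with $|h^{(5)}(x)|<L$ for all $x\in\mathbb{R}$. Polynomial tails: there exist $\gamma,M,K>0$ with $\sup_{|x|>M} f(x)|x|^{\gamma}<K$. Dutchman's cap condition: there exists $\delta_2\in(0,M)$ such that $f(x)\le\exp(-x^2|H|/4)$ for $|x|<\delta_2$ and $f(x)\le\exp(-\delta_2^2|H|/4)$ for $\delta_2\le|x|\le M$. Normalisation: $N(\beta):=\int_{\mathbb{R}}f(x)^\beta\,dx$. *)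

theory Defs
  imports "HOL-Probability.Probability"
begin

definition Cn :: "nat \<Rightarrow> (real \<Rightarrow> real) \<Rightarrow> bool" where
  "Cn n g \<longleftrightarrow>
     (\<forall>k<n. \<forall>x. ((deriv ^^ k) g has_real_derivative (deriv ^^ Suc k) g x) (at x))
     \<and> continuous_on UNIV ((deriv ^^ n) g)"

definition Nf :: "(real \<Rightarrow> real) \<Rightarrow> real \<Rightarrow> real" where
  "Nf f \<beta> = (\<integral>x. f x powr \<beta> \<partial>lborel)"

definition Rem :: "(real \<Rightarrow> real) \<Rightarrow> real \<Rightarrow> real" where
  "Rem f z = (let h = (\<lambda>x. ln (f x)) in
      h z - h 0 - (deriv ^^ 2) h 0 / 2 * z ^ 2 - (deriv ^^ 3) h 0 / 6 * z ^ 3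
        - (deriv ^^ 4) h 0 / 24 * z ^ 4)"

definition joint_law :: "(real \<Rightarrow> real) \<Rightarrow> real \<Rightarrow> real \<Rightarrow> nat
    \<Rightarrow> ((nat \<Rightarrow> real) \<times> (nat \<Rightarrow> real)) measure" where
  "joint_law f H \<beta> d =
     (PiM {..<d} (\<lambda>_. density lborel (\<lambda>x. ennreal (f x powr \<beta> / Nf f \<beta>))))
     \<Otimes>\<^sub>M
     (PiM {..<d} (\<lambda>_. density lborel (\<lambda>x. ennreal (normal_density 0 (1 / sqrt (\<beta> * \<bar>H\<bar>)) x))))"

end

theory Submission
  imports Defs "HOL-Real_Asymp.Real_Asymp"
begin

text \<open>
  By Taylor's theorem \<open>\<bar>Rem f z\<bar> \<le> L/120 \<bar>z\<bar>\<^sup>5\<close>, so by Markov's inequality the probability in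
  question is at most \<open>\<beta> L d (E\<bar>x\<^sub>1\<bar>\<^sup>5 + E\<bar>y\<^sub>1\<bar>\<^sup>5) / (120 \<epsilon>)\<close>. Both fifth absolute moments are
  \<open>O(\<beta>\<^sup>-\<^sup>5\<^sup>/\<^sup>2)\<close>: for the Gaussian this is exact, and for \<open>f\<^sup>\<beta>/N(\<beta>)\<close> the numerator is bounded
  by a Gaussian moment near the peak plus an exponentially small contribution away from it,
  while \<open>N(\<beta>) \<ge> c/\<surd>\<beta>\<close> because \<open>ln f\<close> is bounded below by a quadratic near 0.
  Since \<open>\<beta> = \<ell> d\<close>, the bound is \<open>O(d\<^sup>-\<^sup>1\<^sup>/\<^sup>2)\<close>.
\<close>

text \<open>\<open>Cn\<close> without continuity of the top derivative: exactly what Taylor's theorem needs.\<close>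
definition derivs_upto :: "nat \<Rightarrow> (real \<Rightarrow> real) \<Rightarrow> bool" where
  "derivs_upto n g \<longleftrightarrow> (\<forall>k<n. \<forall>x. ((deriv^^k) g has_real_derivative (deriv^^Suc k) g x) (at x))"

lemma derivs_upto_0 [simp]: "derivs_upto 0 g"
  by (simp add: derivs_upto_def)

lemma derivs_upto_Suc:
  "derivs_upto (Suc n) g \<longleftrightarrow>
     (\<forall>x. (g has_real_derivative deriv g x) (at x)) \<and> derivs_upto n (deriv g)"
proof -
  have "(deriv^^Suc k) g = (deriv^^k) (deriv g)" for k
    by (simp add: funpow_Suc_right del: funpow.simps)
  then show ?thesis
    unfolding derivs_upto_def by (auto simp: less_Suc_eq_0_disj simp del: funpow.simps)
qed

lemma derivs_upto_mono: "m \<le> n \<Longrightarrow> derivs_upto n g \<Longrightarrow> derivs_upto m g"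
  by (auto simp: derivs_upto_def)

lemma derivs_upto_SucD:
  assumes "derivs_upto (Suc n) g"
  shows "derivs_upto n g" "derivs_upto n (deriv g)" "(g has_real_derivative deriv g x) (at x)"
  using assms derivs_upto_mono[of n "Suc n" g] by (auto simp: derivs_upto_Suc)

lemma Cn_imp_derivs_upto: "Cn n g \<Longrightarrow> derivs_upto n g"
  by (simp add: Cn_def derivs_upto_def)

lemma derivs_upto_const: "derivs_upto n (\<lambda>x. c)"
proof (induction n arbitrary: c)
  case (Suc n)
  have "deriv (\<lambda>x. c) = (\<lambda>x. 0)" by auto
  then show ?case using Suc by (auto simp: derivs_upto_Suc)
qed simp

lemma derivs_upto_add:
  "derivs_upto n f \<Longrightarrow> derivs_upto n g \<Longrightarrow> derivs_upto n (\<lambda>x. f x + g x)"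
proof (induction n arbitrary: f g)
  case (Suc n)
  note df = derivs_upto_SucD(3)[OF Suc.prems(1)] and dg = derivs_upto_SucD(3)[OF Suc.prems(2)]
  have "deriv (\<lambda>x. f x + g x) = (\<lambda>x. deriv f x + deriv g x)"
    by (rule ext, rule DERIV_imp_deriv) (intro derivative_intros df dg)
  then show ?case
    using Suc by (auto simp: derivs_upto_Suc intro!: derivative_eq_intros df dg)
qed simp

lemma derivs_upto_mult:
  "derivs_upto n f \<Longrightarrow> derivs_upto n g \<Longrightarrow> derivs_upto n (\<lambda>x. f x * g x)"
proof (induction n arbitrary: f g)
  case (Suc n)
  note df = derivs_upto_SucD[OF Suc.prems(1)] and dg = derivs_upto_SucD[OF Suc.prems(2)]
  have "deriv (\<lambda>x. f x * g x) = (\<lambda>x. deriv f x * g x + f x * deriv g x)"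
    by (rule ext, rule DERIV_imp_deriv) (auto intro!: derivative_eq_intros df dg)
  then show ?case
    using df dg by (auto simp: derivs_upto_Suc intro!: derivative_eq_intros derivs_upto_add Suc.IH)
qed simp

lemma derivs_upto_inverse:
  assumes pos: "\<And>x. f x > 0" and "derivs_upto n f"
  shows "derivs_upto n (\<lambda>x. 1 / f x)"
  using assms(2)
proof (induction n)
  case (Suc n)
  note df = derivs_upto_SucD[OF Suc.prems]
  have nz: "f x \<noteq> 0" for x using pos[of x] by simp
  have "deriv (\<lambda>x. 1 / f x) = (\<lambda>x. (-1) * deriv f x * ((1 / f x) * (1 / f x)))"
    by (rule ext, rule DERIV_imp_deriv)
       (use nz in \<open>auto intro!: derivative_eq_intros df simp: field_simps power2_eq_square\<close>)
  moreover have "derivs_upto n (\<lambda>x. (-1) * deriv f x * ((1 / f x) * (1 / f x)))"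
    using df Suc.IH by (intro derivs_upto_mult derivs_upto_const) auto
  ultimately show ?case
    using nz by (auto simp: derivs_upto_Suc intro!: derivative_eq_intros df)
qed simp

lemma derivs_upto_ln:
  assumes pos: "\<And>x. f x > 0" and "derivs_upto n f"
  shows "derivs_upto n (\<lambda>x. ln (f x))"
proof (cases n)
  case (Suc m)
  note df = derivs_upto_SucD[OF assms(2)[unfolded Suc]]
  have "deriv (\<lambda>x. ln (f x)) = (\<lambda>x. deriv f x * (1 / f x))"
    by (rule ext, rule DERIV_imp_deriv) (use pos in \<open>auto intro!: derivative_eq_intros df\<close>)
  moreover have "derivs_upto m (\<lambda>x. deriv f x * (1 / f x))"
    using df by (intro derivs_upto_mult derivs_upto_inverse pos)
  ultimately show ?thesis
    using pos unfolding Suc by (auto simp: derivs_upto_Suc intro!: derivative_eq_intros df)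
qed simp

lemma Rem_eq_Maclaurin:
  assumes "derivs_upto 5 (\<lambda>x. ln (f x))" and "deriv (\<lambda>x. ln (f x)) 0 = 0"
  obtains t where "\<bar>t\<bar> \<le> \<bar>z\<bar>" "Rem f z = (deriv^^5) (\<lambda>x. ln (f x)) t / 120 * z^5"
proof -
  define h where "h = (\<lambda>x. ln (f x))"
  have "\<exists>t. \<bar>t\<bar> \<le> \<bar>z\<bar> \<and>
      h z = (\<Sum>m<5. (deriv^^m) h 0 / fact m * z ^ m) + (deriv^^5) h t / fact 5 * z ^ 5"
    by (rule Maclaurin_bi_le) (use assms in \<open>auto simp: derivs_upto_def h_def\<close>)
  then obtain t where t: "\<bar>t\<bar> \<le> \<bar>z\<bar>"
    "h z = (\<Sum>m<5. (deriv^^m) h 0 / fact m * z ^ m) + (deriv^^5) h t / fact 5 * z ^ 5"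
    by blast
  have "fact 2 = (2::real)" "fact 3 = (6::real)" "fact 4 = (24::real)" "fact 5 = (120::real)"
    by (simp_all add: fact_numeral)
  then show ?thesis
    using t assms(2) by (intro that[of t]) (simp_all add: Rem_def h_def numeral_eq_Suc)
qed

lemma derivs_upto_imp_continuous:
  assumes "derivs_upto (Suc n) g" shows "continuous_on UNIV g"
  using DERIV_isCont[OF derivs_upto_SucD(3)[OF assms]] by (intro continuous_at_imp_continuous_on) auto

lemma abs_Rem_le:
  assumes pos: "\<And>x. f x > 0" and "Cn 5 f" and "deriv f 0 = 0"
    and bound: "\<And>x. \<bar>(deriv^^5) (\<lambda>x. ln (f x)) x\<bar> \<le> L"
  shows "\<bar>Rem f z\<bar> \<le> L/120 * \<bar>z\<bar>^5"
proof -
  have f: "derivs_upto 5 f" using \<open>Cn 5 f\<close> by (rule Cn_imp_derivs_upto)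
  then have "(f has_real_derivative deriv f 0) (at 0)"
    using derivs_upto_SucD(3)[of 4 f] by (simp add: numeral_eq_Suc)
  then have "((\<lambda>x. ln (f x)) has_real_derivative deriv f 0 / f 0) (at 0)"
    using pos[of 0] by (auto intro!: derivative_eq_intros)
  then have "deriv (\<lambda>x. ln (f x)) 0 = 0" using \<open>deriv f 0 = 0\<close> by (simp add: DERIV_imp_deriv)
  then obtain t where "Rem f z = (deriv^^5) (\<lambda>x. ln (f x)) t / 120 * z^5"
    using Rem_eq_Maclaurin[OF derivs_upto_ln[OF pos f]] by blast
  then have "\<bar>Rem f z\<bar> = \<bar>(deriv^^5) (\<lambda>x. ln (f x)) t\<bar> / 120 * \<bar>z\<bar>^5"
    by (simp only: abs_mult abs_divide power_abs)
  also have "\<dots> \<le> L/120 * \<bar>z\<bar>^5"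
    using bound[of t] by (intro mult_right_mono divide_right_mono) auto
  finally show ?thesis .
qed

lemma ln_ge_neg_quadratic:
  assumes "f 0 = 1" and "c \<ge> 0" and Rem_le: "\<And>z. \<bar>Rem f z\<bar> \<le> c * \<bar>z\<bar>^5"
  obtains A where "A > 0" "\<And>x. \<bar>x\<bar> \<le> 1 \<Longrightarrow> -A * x^2 \<le> ln (f x)"
proof -
  define h2 h3 h4 where "h2 = (deriv^^2) (\<lambda>x. ln (f x)) 0"
    and "h3 = (deriv^^3) (\<lambda>x. ln (f x)) 0" and "h4 = (deriv^^4) (\<lambda>x. ln (f x)) 0"
  define A where "A = \<bar>h2\<bar>/2 + \<bar>h3\<bar>/6 + \<bar>h4\<bar>/24 + c + 1"
  have "-A * x^2 \<le> ln (f x)" if x: "\<bar>x\<bar> \<le> 1" for x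
  proof -
    have ln_eq: "ln (f x) = h2/2 * x^2 + h3/6 * x^3 + h4/24 * x^4 + Rem f x"
      by (simp add: Rem_def Let_def assms(1) h2_def h3_def h4_def)
    have pow_le: "\<bar>x\<bar>^k \<le> x^2" if "k \<ge> 2" for k
      using power_decreasing[OF that, of "\<bar>x\<bar>"] x by simp
    have "\<bar>h2/2 * x^2\<bar> \<le> \<bar>h2\<bar>/2 * x^2" "\<bar>h3/6 * x^3\<bar> \<le> \<bar>h3\<bar>/6 * x^2"
      "\<bar>h4/24 * x^4\<bar> \<le> \<bar>h4\<bar>/24 * x^2" "\<bar>Rem f x\<bar> \<le> c * x^2"
      using pow_le[of 3] pow_le[of 4] pow_le[of 5] Rem_le[of x] \<open>c \<ge> 0\<close>
      by (auto simp: abs_mult power_abs intro: mult_left_mono order_trans)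
    then have "- (A * x^2) \<le> ln (f x) - x^2"
      unfolding ln_eq A_def distrib_right by (simp only: abs_le_iff) linarith
    then show ?thesis using zero_le_power2[of x] by linarith
  qed
  moreover have "A > 0" using \<open>c \<ge> 0\<close> by (simp add: A_def add_pos_nonneg)
  ultimately show ?thesis using that by blast
qed

lemma nn_integral_powr_neg2_tail:
  fixes R :: real assumes "R > 0"
  shows "(\<integral>\<^sup>+x. ennreal (x powr -2) * indicator {R..} x \<partial>lborel) = ennreal (1/R)"
proof -
  have "((\<lambda>x. x powr -2) has_integral -(R powr (-2+1)) / (-2+1)) {R..}"
    by (rule has_integral_powr_to_inf) (use assms in auto)
  then have "((\<lambda>x. x powr -2) has_integral 1/R) {R..}"
    using assms by (simp add: powr_minus_divide)
  then show ?thesis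
    by (intro nn_integral_has_integral_lebesgue') auto
qed

lemma nn_integral_abs_powr_neg2_tail:
  fixes R :: real assumes "R > 0"
  shows "(\<integral>\<^sup>+x. ennreal (\<bar>x\<bar> powr -2) * indicator {x. R \<le> \<bar>x\<bar>} x \<partial>lborel) = ennreal (2/R)"
proof -
  let ?g = "\<lambda>x::real. ennreal (x powr -2) * indicator {R..} x"
  have "ennreal (\<bar>x\<bar> powr -2) * indicator {x. R \<le> \<bar>x\<bar>} x = ?g x + ?g (-x)" for x
    using assms by (auto split: split_indicator)
  then have "(\<integral>\<^sup>+x. ennreal (\<bar>x\<bar> powr -2) * indicator {x. R \<le> \<bar>x\<bar>} x \<partial>lborel) =
      (\<integral>\<^sup>+x. ?g x \<partial>lborel) + (\<integral>\<^sup>+x. ?g (-x) \<partial>lborel)"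
    by (simp only:) (rule nn_integral_add; simp)
  also have "(\<integral>\<^sup>+x. ?g (-x) \<partial>lborel) = (\<integral>\<^sup>+x. ?g x \<partial>lborel)"
    using nn_integral_real_affine[of ?g "-1" 0] by simp
  also have "\<dots> + \<dots> = ennreal (2/R)"
    using assms by (simp add: nn_integral_powr_neg2_tail flip: ennreal_plus)
  finally show ?thesis .
qed

lemma nn_integral_normal_abs_pow5:
  assumes "\<sigma> > 0"
  shows "(\<integral>\<^sup>+x. ennreal (normal_density 0 \<sigma> x * \<bar>x\<bar>^5) \<partial>lborel) = ennreal (8 * \<sigma>^5 * sqrt (2/pi))"
proof -
  have "has_bochner_integral lborel (\<lambda>x. normal_density 0 \<sigma> x * \<bar>x - 0\<bar>^(2*2+1))
      (2^2 * \<sigma>^(2*2+1) * fact 2 * sqrt (2 / pi))"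
    by (rule normal_moment_abs_odd) (use assms in auto)
  then have hb: "has_bochner_integral lborel (\<lambda>x. normal_density 0 \<sigma> x * \<bar>x\<bar>^5) (8 * \<sigma>^5 * sqrt (2/pi))"
    by (simp add: numeral_eq_Suc)
  show ?thesis
    using nn_integral_eq_integral[OF integrable.intros[OF hb]] has_bochner_integral_integral_eq[OF hb]
    by simp
qed

lemma nn_integral_gauss_abs_pow5:
  assumes "a > 0"
  shows "(\<integral>\<^sup>+x. ennreal (exp (-a*x^2) * \<bar>x\<bar>^5) \<partial>lborel) = ennreal (2/a^3)"
proof -
  define \<sigma> where "\<sigma> = 1 / sqrt (2*a)"
  have \<sigma>: "\<sigma> > 0" "\<sigma>^2 = 1 / (2*a)" using assms by (auto simp: \<sigma>_def power_divide)
  have pointwise: "exp (-a*x^2) * \<bar>x\<bar>^5 = sqrt (2*pi) * \<sigma> * (normal_density 0 \<sigma> x * \<bar>x\<bar>^5)" for x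
  proof -
    have "sqrt (2*pi*\<sigma>^2) = sqrt (2*pi) * \<sigma>" using \<sigma>(1) by (simp add: real_sqrt_mult)
    moreover have "-(x - 0)\<^sup>2 / (2 * \<sigma>\<^sup>2) = -a*x^2" using \<sigma> assms by (simp add: field_simps)
    ultimately show ?thesis unfolding normal_density_def using \<sigma> by (simp add: field_simps)
  qed
  have "(\<integral>\<^sup>+x. ennreal (exp (-a*x^2) * \<bar>x\<bar>^5) \<partial>lborel)
      = (\<integral>\<^sup>+x. ennreal (sqrt (2*pi) * \<sigma>) * ennreal (normal_density 0 \<sigma> x * \<bar>x\<bar>^5) \<partial>lborel)"
    unfolding pointwise using \<sigma> by (simp add: ennreal_mult)
  also have "\<dots> = ennreal (sqrt (2*pi) * \<sigma>) * ennreal (8 * \<sigma>^5 * sqrt (2/pi))"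
    by (subst nn_integral_cmult) (auto simp: nn_integral_normal_abs_pow5[OF \<sigma>(1)])
  also have "\<dots> = ennreal (sqrt (2*pi) * \<sigma> * (8 * \<sigma>^5 * sqrt (2/pi)))"
    using \<sigma> by (simp add: ennreal_mult)
  also have "sqrt (2*pi) * \<sigma> * (8 * \<sigma>^5 * sqrt (2/pi)) = 8 * (\<sigma>^2)^3 * (sqrt (2*pi) * sqrt (2/pi))"
    by (simp add: eval_nat_numeral algebra_simps)
  also have "\<dots> = 2/a^3"
    using assms by (simp add: \<sigma> real_sqrt_mult[symmetric] power_divide field_simps)
  finally show ?thesis .
qed

lemma pow3_mult_exp_le:
  fixes c b :: real assumes "c > 0" and "b \<ge> 0"
  shows "b^3 * exp (-c*b) \<le> 27/c^3"
proof -
  have "c*b/3 \<le> exp (c*b/3)"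
    using exp_ge_add_one_self[of "c*b/3"] by linarith
  then have "(c*b/3)^3 \<le> exp (c*b/3)^3"
    using assms by (intro power_mono) auto
  also have "exp (c*b/3)^3 = exp (c*b)" by (subst exp_of_nat_mult[symmetric]) simp
  finally have "b^3 \<le> 27/c^3 * exp (c*b)"
    using assms by (simp add: power_divide power_mult_distrib field_simps)
  then show ?thesis by (simp add: exp_minus field_simps)
qed

lemma Nf_nonneg: "Nf f \<beta> \<ge> 0"
  unfolding Nf_def by (intro integral_nonneg_AE) auto

lemma nn_integral_PiM_component:
  assumes "\<And>i. i \<in> I \<Longrightarrow> prob_space (M i)" "i \<in> I" "g \<in> borel_measurable (M i)"
  shows "(\<integral>\<^sup>+\<omega>. g (\<omega> i) \<partial>PiM I M) = (\<integral>\<^sup>+x. g x \<partial>M i)"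
proof -
  have "(\<integral>\<^sup>+x. g x \<partial>M i) = (\<integral>\<^sup>+x. g x \<partial>distr (PiM I M) (M i) (\<lambda>\<omega>. \<omega> i))"
    using distr_PiM_component[of I M i] assms by simp
  also have "\<dots> = (\<integral>\<^sup>+\<omega>. g (\<omega> i) \<partial>PiM I M)"
    using assms by (subst nn_integral_distr) (auto intro: measurable_component_singleton)
  finally show ?thesis by simp
qed

lemma nn_integral_pair_fst:
  assumes "prob_space M2" "g \<in> borel_measurable M1"
  shows "(\<integral>\<^sup>+p. g (fst p) \<partial>(M1 \<Otimes>\<^sub>M M2)) = (\<integral>\<^sup>+x. g x \<partial>M1)"
proof -
  interpret M2: prob_space M2 by fact
  have "(\<integral>\<^sup>+x. g x \<partial>M1) = (\<integral>\<^sup>+x. g x \<partial>distr (M1 \<Otimes>\<^sub>M M2) M1 fst)"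
    using M2.distr_pair_fst[of M1] by simp
  also have "\<dots> = (\<integral>\<^sup>+p. g (fst p) \<partial>(M1 \<Otimes>\<^sub>M M2))"
    using assms by (subst nn_integral_distr) auto
  finally show ?thesis by simp
qed

lemma nn_integral_pair_snd:
  assumes "prob_space M1" "prob_space M2" "g \<in> borel_measurable M2"
  shows "(\<integral>\<^sup>+p. g (snd p) \<partial>(M1 \<Otimes>\<^sub>M M2)) = (\<integral>\<^sup>+x. g x \<partial>M2)"
proof -
  interpret M1: prob_space M1 by fact
  interpret M2: prob_space M2 by fact
  have "(\<integral>\<^sup>+p. g (snd p) \<partial>(M1 \<Otimes>\<^sub>M M2)) = (\<integral>\<^sup>+x. \<integral>\<^sup>+y. g y \<partial>M2 \<partial>M1)"
    using assms by (subst M2.nn_integral_fst[symmetric]) auto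
  also have "\<dots> = (\<integral>\<^sup>+y. g y \<partial>M2)" by (simp add: M1.emeasure_space_1)
  finally show ?thesis .
qed

lemma nn_integral_sum_coordinates:
  fixes MX MY :: "real measure" and g :: "real \<Rightarrow> ennreal"
  assumes X: "prob_space MX" "sets MX = sets borel" and Y: "prob_space MY" "sets MY = sets borel"
    and g: "g \<in> borel_measurable borel"
  shows "(\<integral>\<^sup>+p. (\<Sum>i<d. g (fst p i) + g (snd p i)) \<partial>(PiM {..<d} (\<lambda>_. MX) \<Otimes>\<^sub>M PiM {..<d} (\<lambda>_. MY)))
           = of_nat d * ((\<integral>\<^sup>+x. g x \<partial>MX) + (\<integral>\<^sup>+x. g x \<partial>MY))"
proof -
  let ?PX = "PiM {..<d} (\<lambda>_. MX)" and ?PY = "PiM {..<d} (\<lambda>_. MY)"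
  have PX: "prob_space ?PX" and PY: "prob_space ?PY"
    using X Y by (auto intro: prob_space_PiM)
  have gX: "g \<in> borel_measurable MX" and gY: "g \<in> borel_measurable MY"
    using g by (simp_all add: measurable_cong_sets[OF X(2) refl] measurable_cong_sets[OF Y(2) refl])
  have cX: "(\<lambda>\<omega>. g (\<omega> i)) \<in> borel_measurable ?PX" and cY: "(\<lambda>\<omega>. g (\<omega> i)) \<in> borel_measurable ?PY"
    if "i < d" for i
    using that gX gY by (auto intro: measurable_compose[OF measurable_component_singleton])
  have "(\<integral>\<^sup>+p. g (fst p i) + g (snd p i) \<partial>(?PX \<Otimes>\<^sub>M ?PY)) = (\<integral>\<^sup>+x. g x \<partial>MX) + (\<integral>\<^sup>+x. g x \<partial>MY)"
    if i: "i < d" for i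
  proof -
    have "(\<integral>\<^sup>+p. g (fst p i) + g (snd p i) \<partial>(?PX \<Otimes>\<^sub>M ?PY))
        = (\<integral>\<^sup>+\<omega>. g (\<omega> i) \<partial>?PX) + (\<integral>\<^sup>+\<omega>. g (\<omega> i) \<partial>?PY)"
      using nn_integral_pair_fst[OF PY cX[OF i]] nn_integral_pair_snd[OF PX PY cY[OF i]] cX[OF i] cY[OF i]
      by (subst nn_integral_add) auto
    also have "\<dots> = (\<integral>\<^sup>+x. g x \<partial>MX) + (\<integral>\<^sup>+x. g x \<partial>MY)"
      using i X Y gX gY by (simp add: nn_integral_PiM_component)
    finally show ?thesis .
  qed
  then show ?thesis
    using cX cY by (subst nn_integral_sum) auto
qed

lemma abs_sum_diff_le:
  fixes R :: "real \<Rightarrow> real"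
  assumes "\<And>z. \<bar>R z\<bar> \<le> c * \<bar>z\<bar>^5"
  shows "\<bar>\<Sum>i<d. R (y i) - R (x i)\<bar> \<le> c * (\<Sum>i<d. \<bar>x i\<bar>^5 + \<bar>y i\<bar>^5)"
proof -
  have "\<bar>\<Sum>i<d. R (y i) - R (x i)\<bar> \<le> (\<Sum>i<d. \<bar>R (y i) - R (x i)\<bar>)" by (rule sum_abs)
  also have "\<dots> \<le> (\<Sum>i<d. c * (\<bar>x i\<bar>^5 + \<bar>y i\<bar>^5))"
  proof (intro sum_mono)
    fix i
    show "\<bar>R (y i) - R (x i)\<bar> \<le> c * (\<bar>x i\<bar>^5 + \<bar>y i\<bar>^5)"
      using assms[of "x i"] assms[of "y i"] abs_triangle_ineq4[of "R (y i)" "R (x i)"]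
      unfolding distrib_left by linarith
  qed
  finally show ?thesis by (simp add: sum_distrib_left)
qed

lemma borel_measurable_sum_coordinates:
  fixes MX MY :: "real measure" and g :: "real \<Rightarrow> ennreal"
  assumes "sets MX = sets borel" "sets MY = sets borel" and "g \<in> borel_measurable borel"
  shows "(\<lambda>p. \<Sum>i<d. g (fst p i) + g (snd p i))
           \<in> borel_measurable (PiM {..<d} (\<lambda>_. MX) \<Otimes>\<^sub>M PiM {..<d} (\<lambda>_. MY))"
proof -
  let ?PX = "PiM {..<d} (\<lambda>_. MX)" and ?PY = "PiM {..<d} (\<lambda>_. MY)"
  have "g \<in> borel_measurable MX" "g \<in> borel_measurable MY"
    using assms(3) by (simp_all add: measurable_cong_sets[OF assms(1) refl] measurable_cong_sets[OF assms(2) refl])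
  then have "(\<lambda>\<omega>. g (\<omega> i)) \<in> borel_measurable ?PX" "(\<lambda>\<omega>. g (\<omega> i)) \<in> borel_measurable ?PY"
    if "i < d" for i
    using that by (auto intro: measurable_compose[OF measurable_component_singleton])
  then have "(\<lambda>p. g (fst p i)) \<in> borel_measurable (?PX \<Otimes>\<^sub>M ?PY)"
    "(\<lambda>p. g (snd p i)) \<in> borel_measurable (?PX \<Otimes>\<^sub>M ?PY)" if "i < d" for i
    using measurable_compose[OF measurable_fst] measurable_compose[OF measurable_snd] that by blast+
  then show ?thesis by (intro borel_measurable_sum borel_measurable_add) auto
qed

lemma measure_abs_sum_diff_gt_le:
  fixes MX MY :: "real measure" and R :: "real \<Rightarrow> real" and d :: nat
  defines "P \<equiv> PiM {..<d} (\<lambda>_. MX) \<Otimes>\<^sub>M PiM {..<d} (\<lambda>_. MY)"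
  assumes X: "prob_space MX" "sets MX = sets borel" and Y: "prob_space MY" "sets MY = sets borel"
    and "\<epsilon> > 0" and "\<beta> > 0" and "c \<ge> 0" and "BX \<ge> 0" and "BY \<ge> 0"
    and mX: "(\<integral>\<^sup>+x. ennreal (\<bar>x\<bar>^5) \<partial>MX) \<le> ennreal BX"
    and mY: "(\<integral>\<^sup>+x. ennreal (\<bar>x\<bar>^5) \<partial>MY) \<le> ennreal BY"
    and R: "\<And>z. \<bar>R z\<bar> \<le> c * \<bar>z\<bar>^5"
  shows "measure P {p \<in> space P. \<bar>\<beta> * (\<Sum>i<d. R (snd p i) - R (fst p i))\<bar> > \<epsilon>}
           \<le> \<beta> * c * real d * (BX + BY) / \<epsilon>"
proof -
  interpret P: prob_space P
    unfolding P_def using X Y by (intro prob_space_pair prob_space_PiM) auto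
  let ?V = "\<lambda>p. \<Sum>i<d. ennreal (\<bar>fst p i\<bar>^5) + ennreal (\<bar>snd p i\<bar>^5)"
  have V_meas: "?V \<in> borel_measurable P"
    unfolding P_def using X(2) Y(2) by (rule borel_measurable_sum_coordinates) simp
  have "(\<integral>\<^sup>+p. ?V p \<partial>P) = of_nat d * ((\<integral>\<^sup>+x. ennreal (\<bar>x\<bar>^5) \<partial>MX) + (\<integral>\<^sup>+x. ennreal (\<bar>x\<bar>^5) \<partial>MY))"
    unfolding P_def by (rule nn_integral_sum_coordinates[OF X Y]) simp
  also have "\<dots> \<le> of_nat d * (ennreal BX + ennreal BY)"
    using mX mY by (intro mult_left_mono add_mono) auto
  also have "\<dots> = ennreal (real d * (BX + BY))"
    using \<open>BX \<ge> 0\<close> \<open>BY \<ge> 0\<close> by (simp add: ennreal_of_nat_eq_real_of_nat flip: ennreal_mult ennreal_plus)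
  finally have V_le: "(\<integral>\<^sup>+p. ?V p \<partial>P) \<le> ennreal (real d * (BX + BY))" .
  let ?S = "{p \<in> space P. \<bar>\<beta> * (\<Sum>i<d. R (snd p i) - R (fst p i))\<bar> > \<epsilon>}"
  let ?T = "{p \<in> space P. 1 \<le> ennreal (\<beta> * c / \<epsilon>) * ?V p}"
  have "?S \<subseteq> ?T"
  proof safe
    fix p assume gt: "\<epsilon> < \<bar>\<beta> * (\<Sum>i<d. R (snd p i) - R (fst p i))\<bar>"
    also have "\<dots> \<le> \<beta> * (c * (\<Sum>i<d. \<bar>fst p i\<bar>^5 + \<bar>snd p i\<bar>^5))"
      using abs_sum_diff_le[OF R, where d=d and x="fst p" and y="snd p"] \<open>\<beta> > 0\<close> by (simp add: abs_mult)
    finally show "1 \<le> ennreal (\<beta> * c / \<epsilon>) * ?V p"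
      using \<open>\<epsilon> > 0\<close> \<open>\<beta> > 0\<close> \<open>c \<ge> 0\<close>
      by (simp add: ennreal_leI sum_nonneg field_simps flip: ennreal_mult ennreal_plus)
  qed
  have "emeasure P ?T \<le> ennreal (\<beta> * c / \<epsilon>) * (\<integral>\<^sup>+p. ?V p * indicator (space P) p \<partial>P)"
    using V_meas by (intro nn_integral_Markov_inequality) auto
  also have "(\<integral>\<^sup>+p. ?V p * indicator (space P) p \<partial>P) = (\<integral>\<^sup>+p. ?V p \<partial>P)"
    by (intro nn_integral_cong) simp
  also have "ennreal (\<beta> * c / \<epsilon>) * \<dots> \<le> ennreal (\<beta> * c / \<epsilon>) * ennreal (real d * (BX + BY))"
    using V_le by (rule mult_left_mono) simp
  finally have "measure P ?T \<le> \<beta> * c * real d * (BX + BY) / \<epsilon>"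
    using \<open>\<epsilon> > 0\<close> \<open>\<beta> > 0\<close> \<open>c \<ge> 0\<close> \<open>BX \<ge> 0\<close> \<open>BY \<ge> 0\<close>
    by (simp add: P.emeasure_eq_measure ennreal_le_iff flip: ennreal_mult)
  moreover have "measure P ?S \<le> measure P ?T"
    using \<open>?S \<subseteq> ?T\<close> V_meas by (intro P.finite_measure_mono) auto
  ultimately show ?thesis by linarith
qed

lemma normal_fifth_abs_moment:
  assumes "\<sigma> > 0"
  shows "(\<integral>\<^sup>+x. ennreal (\<bar>x\<bar>^5) \<partial>density lborel (\<lambda>x. ennreal (normal_density 0 \<sigma> x)))
           = ennreal (8 * \<sigma>^5 * sqrt (2/pi))"
  using nn_integral_normal_abs_pow5[OF assms]
  by (subst nn_integral_density) (auto simp: ennreal_mult)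

abbreviation tempered :: "(real \<Rightarrow> real) \<Rightarrow> real \<Rightarrow> real measure" where
  "tempered f \<beta> \<equiv> density lborel (\<lambda>x. ennreal (f x powr \<beta> / Nf f \<beta>))"

locale peaked_density =
  fixes f :: "real \<Rightarrow> real" and A a \<delta> M K \<gamma> :: real
  assumes f_pos: "\<And>x. 0 < f x" and f_cont: "continuous_on UNIV f"
    and f0: "f 0 = 1" and f_less_1: "\<And>x. x \<noteq> 0 \<Longrightarrow> f x < 1"
    and A_pos: "A > 0" and ln_f_ge: "\<And>x. \<bar>x\<bar> \<le> 1 \<Longrightarrow> -A*x^2 \<le> ln (f x)"
    and a_pos: "a > 0" and \<delta>_pos: "\<delta> > 0" and f_le_gauss: "\<And>x. \<bar>x\<bar> < \<delta> \<Longrightarrow> f x \<le> exp (-a*x^2)"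
    and \<gamma>_pos: "\<gamma> > 0" and M_pos: "M > 0" and K_pos: "K > 0"
    and f_tail: "\<And>x. \<bar>x\<bar> > M \<Longrightarrow> f x * \<bar>x\<bar> powr \<gamma> \<le> K"
begin

lemma f_le_1: "f x \<le> 1"
  using f_less_1[of x] f0 by (cases "x = 0") auto

lemma f_measurable [measurable]: "f \<in> borel_measurable borel"
  using f_cont by (intro borel_measurable_continuous_onI) auto

lemma f_le_tail: "\<bar>x\<bar> > M \<Longrightarrow> f x \<le> K * \<bar>x\<bar> powr (-\<gamma>)"
  using f_tail[of x] M_pos by (simp add: powr_minus field_simps)

definition tail_radius :: real where
  "tail_radius = max (M+1) ((2*K) powr (1/\<gamma>))"

lemma tail_radius_gt: "tail_radius \<ge> 1" "tail_radius > M"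
  using M_pos by (auto simp: tail_radius_def)

lemma f_le_half: assumes "\<bar>x\<bar> \<ge> tail_radius" shows "f x \<le> 1/2"
proof -
  have "2*K = ((2*K) powr (1/\<gamma>)) powr \<gamma>" using \<gamma>_pos K_pos by (simp add: powr_powr)
  also have "\<dots> \<le> \<bar>x\<bar> powr \<gamma>"
    using assms \<gamma>_pos by (intro powr_mono2) (auto simp: tail_radius_def)
  finally have "f x * (2*K) \<le> f x * \<bar>x\<bar> powr \<gamma>" using f_pos[of x] by simp
  also have "\<dots> \<le> K" using f_tail assms tail_radius_gt by force
  finally show ?thesis using K_pos by (simp add: field_simps)
qed

text \<open>Away from the peak \<open>f\<close> stays below a level \<open>< 1\<close>: on a compact annulus by continuity and
  uniqueness of the maximiser, beyond \<open>tail_radius\<close> by the tail bound.\<close>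
lemma ex_off_peak_bound: "\<exists>q. 0 < q \<and> q < 1 \<and> (\<forall>x. \<delta> \<le> \<bar>x\<bar> \<longrightarrow> f x \<le> q)"
proof -
  define c where "c = min \<delta> tail_radius"
  have c: "c > 0" "c \<le> tail_radius" using \<delta>_pos tail_radius_gt by (auto simp: c_def)
  define S where "S = {-tail_radius..-c} \<union> {c..tail_radius}"
  have "compact S" "tail_radius \<in> S" using c by (auto simp: S_def)
  then obtain x0 where x0: "x0 \<in> S" "\<And>y. y \<in> S \<Longrightarrow> f y \<le> f x0"
    using continuous_attains_sup[of S f] continuous_on_subset[OF f_cont] by blast
  have "x0 \<noteq> 0" using x0(1) c by (auto simp: S_def)
  then have "f x0 < 1" by (rule f_less_1)
  moreover have "f x \<le> max (1/2) (f x0)" if "\<delta> \<le> \<bar>x\<bar>" for x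
  proof (cases "\<bar>x\<bar> \<ge> tail_radius")
    case True then show ?thesis using f_le_half[OF True] by simp
  next
    case False
    then have "x \<in> S" using that by (auto simp: S_def c_def)
    then show ?thesis using x0(2)[of x] by simp
  qed
  ultimately show ?thesis by (intro exI[of _ "max (1/2) (f x0)"]) auto
qed

definition off_peak_bound :: real where
  "off_peak_bound = (SOME q. 0 < q \<and> q < 1 \<and> (\<forall>x. \<delta> \<le> \<bar>x\<bar> \<longrightarrow> f x \<le> q))"

lemma off_peak_bound: "0 < off_peak_bound" "off_peak_bound < 1"
  "\<And>x. \<delta> \<le> \<bar>x\<bar> \<Longrightarrow> f x \<le> off_peak_bound"
  using someI_ex[OF ex_off_peak_bound] unfolding off_peak_bound_def[symmetric] by auto

text \<open>An exponent large enough that \<open>f\<^sup>p (1 + \<bar>x\<bar>\<^sup>5) = O(\<bar>x\<bar>\<^sup>-\<^sup>2)\<close> at infinity.\<close>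
definition base_exp :: real where
  "base_exp = max 1 (7/\<gamma>)"

lemma base_exp: "base_exp \<ge> 1" "\<gamma> * base_exp \<ge> 7"
  using \<gamma>_pos by (auto simp: base_exp_def field_simps max_def)

lemma f_powr_weight_le_tail:
  assumes "\<bar>x\<bar> > tail_radius"
  shows "f x powr base_exp * (1+\<bar>x\<bar>^5) \<le> 2 * K powr base_exp * \<bar>x\<bar> powr -2"
proof -
  have x: "\<bar>x\<bar> > M" "\<bar>x\<bar> \<ge> 1" using assms tail_radius_gt by auto
  have "f x powr base_exp \<le> (K * \<bar>x\<bar> powr (-\<gamma>)) powr base_exp"
    using f_le_tail[OF x(1)] f_pos[of x] base_exp by (intro powr_mono2) auto
  also have "\<dots> = K powr base_exp * \<bar>x\<bar> powr (-\<gamma>*base_exp)"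
    using K_pos by (simp add: powr_mult powr_powr)
  finally have "f x powr base_exp * (1+\<bar>x\<bar>^5)
      \<le> K powr base_exp * \<bar>x\<bar> powr (-\<gamma>*base_exp) * (2 * \<bar>x\<bar> powr 5)"
    using x one_le_power[of "\<bar>x\<bar>" 5] by (intro mult_mono) (auto simp: powr_realpow)
  also have "\<dots> = 2 * K powr base_exp * \<bar>x\<bar> powr (5 - \<gamma>*base_exp)"
    by (simp add: powr_diff powr_minus field_simps)
  also have "\<dots> \<le> 2 * K powr base_exp * \<bar>x\<bar> powr -2"
    using base_exp x by (intro mult_left_mono powr_mono) auto
  finally show ?thesis .
qed

lemma f_powr_weight_le:
  "f x powr base_exp * (1+\<bar>x\<bar>^5)
     \<le> (1+tail_radius^5) * indicator {-tail_radius..tail_radius} x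
       + 2*K powr base_exp * (\<bar>x\<bar> powr -2 * indicator {x. tail_radius \<le> \<bar>x\<bar>} x)"
proof (cases "\<bar>x\<bar> \<le> tail_radius")
  case True
  have "f x powr base_exp \<le> 1"
    using f_le_1[of x] f_pos[of x] base_exp powr_mono2[of base_exp "f x" 1] by auto
  moreover have "\<bar>x\<bar>^5 \<le> tail_radius^5" using True by (intro power_mono) auto
  ultimately have "f x powr base_exp * (1+\<bar>x\<bar>^5) \<le> 1 * (1+tail_radius^5)"
    by (intro mult_mono) auto
  moreover have "0 \<le> 2 * K powr base_exp * \<bar>x\<bar> powr -2" by simp
  ultimately show ?thesis using True by (auto simp: abs_le_iff split: split_indicator simp del: powr_ge_zero)
next
  case False
  then show ?thesis
    using f_powr_weight_le_tail[of x] tail_radius_gt by (auto split: split_indicator)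
qed

lemma nn_integral_f_powr_weight_finite:
  "(\<integral>\<^sup>+x. ennreal (f x powr base_exp * (1+\<bar>x\<bar>^5)) \<partial>lborel) < \<infinity>"
proof -
  let ?R = tail_radius and ?p = base_exp
  have R: "?R > 0" using tail_radius_gt by simp
  have "(\<integral>\<^sup>+x. ennreal (f x powr ?p * (1+\<bar>x\<bar>^5)) \<partial>lborel) \<le>
      (\<integral>\<^sup>+x. ennreal (1+?R^5) * indicator {-?R..?R} x
        + ennreal (2*K powr ?p) * (ennreal (\<bar>x\<bar> powr -2) * indicator {x. ?R \<le> \<bar>x\<bar>} x) \<partial>lborel)"
  proof (intro nn_integral_mono)
    fix x
    have "ennreal (f x powr ?p * (1+\<bar>x\<bar>^5)) \<le> ennreal ((1+?R^5) * indicator {-?R..?R} x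
        + 2*K powr ?p * (\<bar>x\<bar> powr -2 * indicator {x. ?R \<le> \<bar>x\<bar>} x))"
      using f_powr_weight_le by (rule ennreal_leI)
    also have "\<dots> = ennreal (1+?R^5) * indicator {-?R..?R} x
        + ennreal (2*K powr ?p) * (ennreal (\<bar>x\<bar> powr -2) * indicator {x. ?R \<le> \<bar>x\<bar>} x)"
      using R by (auto simp: ennreal_plus ennreal_mult split: split_indicator)
    finally show "ennreal (f x powr ?p * (1+\<bar>x\<bar>^5)) \<le> \<dots>" .
  qed
  also have "\<dots> = ennreal (1+?R^5) * ennreal (2*?R) + ennreal (2*K powr ?p) * ennreal (2/?R)"
    using R by (subst nn_integral_add) (auto simp: nn_integral_cmult nn_integral_abs_powr_neg2_tail)
  also have "\<dots> < \<infinity>" by (simp add: ennreal_mult_less_top)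
  finally show ?thesis .
qed

definition base_moment :: real where
  "base_moment = enn2real (\<integral>\<^sup>+x. ennreal (f x powr base_exp * (1+\<bar>x\<bar>^5)) \<partial>lborel)"

lemma nn_integral_f_powr_weight:
  "(\<integral>\<^sup>+x. ennreal (f x powr base_exp * (1+\<bar>x\<bar>^5)) \<partial>lborel) = ennreal base_moment"
  and base_moment_nonneg: "base_moment \<ge> 0"
  using nn_integral_f_powr_weight_finite by (auto simp: base_moment_def ennreal_enn2real_if)

lemma f_powr_le_weight:
  assumes "\<beta> \<ge> base_exp"
  shows "f x powr \<beta> \<le> f x powr base_exp * (1+\<bar>x\<bar>^5)"
proof -
  have "f x powr \<beta> \<le> f x powr base_exp"
    using f_pos[of x] f_le_1[of x] assms by (intro powr_mono') auto
  also have "\<dots> \<le> f x powr base_exp * (1+\<bar>x\<bar>^5)" by (intro mult_le_cancel_left1[THEN iffD2]) auto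
  finally show ?thesis .
qed

lemma integrable_f_powr:
  assumes "\<beta> \<ge> base_exp" shows "integrable lborel (\<lambda>x. f x powr \<beta>)"
proof (rule integrableI_bounded)
  have "(\<integral>\<^sup>+x. ennreal (norm (f x powr \<beta>)) \<partial>lborel)
      \<le> (\<integral>\<^sup>+x. ennreal (f x powr base_exp * (1+\<bar>x\<bar>^5)) \<partial>lborel)"
    using f_powr_le_weight[OF assms] by (intro nn_integral_mono ennreal_leI) auto
  then show "(\<integral>\<^sup>+x. ennreal (norm (f x powr \<beta>)) \<partial>lborel) < \<infinity>"
    using nn_integral_f_powr_weight_finite by (simp add: le_less_trans)
qed simp

lemma f_powr_abs_pow5_le:
  assumes "\<beta> \<ge> base_exp"
  shows "f x powr \<beta> * \<bar>x\<bar>^5 \<le> exp (-(a*\<beta>)*x^2) * \<bar>x\<bar>^5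
           + off_peak_bound powr (\<beta>-base_exp) * (f x powr base_exp * (1+\<bar>x\<bar>^5))"
proof (cases "\<bar>x\<bar> < \<delta>")
  case True
  have "\<beta> * ln (f x) \<le> \<beta> * (-a*x^2)"
    using f_le_gauss[OF True] f_pos[of x] assms base_exp
    by (intro mult_left_mono) (auto simp flip: ln_le_cancel_iff)
  then have "f x powr \<beta> \<le> exp (-(a*\<beta>)*x^2)" using f_pos[of x] by (simp add: powr_def algebra_simps)
  then show ?thesis by (intro add_increasing2 mult_right_mono) auto
next
  case False
  let ?q = off_peak_bound
  have "f x powr \<beta> = f x powr (\<beta>-base_exp) * f x powr base_exp" by (simp flip: powr_add)
  also have "\<dots> \<le> ?q powr (\<beta>-base_exp) * f x powr base_exp"
    using off_peak_bound(3)[of x] False f_pos[of x] assms by (intro mult_right_mono powr_mono2) auto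
  finally have "f x powr \<beta> * \<bar>x\<bar>^5 \<le> ?q powr (\<beta>-base_exp) * f x powr base_exp * \<bar>x\<bar>^5"
    by (intro mult_right_mono) auto
  also have "\<dots> \<le> ?q powr (\<beta>-base_exp) * (f x powr base_exp * (1+\<bar>x\<bar>^5))"
    by (simp add: algebra_simps)
  finally show ?thesis by (simp add: add_increasing)
qed

lemma nn_integral_f_powr_abs_pow5_le:
  assumes "\<beta> \<ge> base_exp"
  shows "(\<integral>\<^sup>+x. ennreal (f x powr \<beta> * \<bar>x\<bar>^5) \<partial>lborel)
           \<le> ennreal (2/(a*\<beta>)^3 + off_peak_bound powr (\<beta>-base_exp) * base_moment)"
proof -
  let ?q = "off_peak_bound powr (\<beta>-base_exp)"
  have a\<beta>: "a*\<beta> > 0" using a_pos assms base_exp by auto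
  have "(\<integral>\<^sup>+x. ennreal (f x powr \<beta> * \<bar>x\<bar>^5) \<partial>lborel) \<le>
     (\<integral>\<^sup>+x. ennreal (exp (-(a*\<beta>)*x^2) * \<bar>x\<bar>^5)
             + ennreal ?q * ennreal (f x powr base_exp * (1+\<bar>x\<bar>^5)) \<partial>lborel)"
    using f_powr_abs_pow5_le[OF assms]
    by (intro nn_integral_mono) (auto simp flip: ennreal_plus ennreal_mult intro!: ennreal_leI)
  also have "\<dots> = (\<integral>\<^sup>+x. ennreal (exp (-(a*\<beta>)*x^2) * \<bar>x\<bar>^5) \<partial>lborel)
      + ennreal ?q * (\<integral>\<^sup>+x. ennreal (f x powr base_exp * (1+\<bar>x\<bar>^5)) \<partial>lborel)"
    by (subst nn_integral_add) (auto simp: nn_integral_cmult)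
  also have "\<dots> = ennreal (2/(a*\<beta>)^3) + ennreal ?q * ennreal base_moment"
    by (simp only: nn_integral_gauss_abs_pow5[OF a\<beta>] nn_integral_f_powr_weight)
  also have "\<dots> = ennreal (2/(a*\<beta>)^3 + ?q * base_moment)"
    using a\<beta> base_moment_nonneg by (simp flip: ennreal_plus ennreal_mult)
  finally show ?thesis .
qed

lemma Nf_eq_nn_integral:
  assumes "\<beta> \<ge> base_exp"
  shows "(\<integral>\<^sup>+x. ennreal (f x powr \<beta>) \<partial>lborel) = ennreal (Nf f \<beta>)"
  unfolding Nf_def by (rule nn_integral_eq_integral[OF integrable_f_powr[OF assms]]) auto

text \<open>The mass of \<open>f\<^sup>\<beta>\<close> on \<open>[-1/\<surd>\<beta>, 1/\<surd>\<beta>]\<close>, where \<open>f\<^sup>\<beta> \<ge> exp (-A)\<close>.\<close>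
lemma Nf_ge:
  assumes "\<beta> \<ge> base_exp"
  shows "2 * exp (-A) / sqrt \<beta> \<le> Nf f \<beta>"
proof -
  define w where "w = 1 / sqrt \<beta>"
  have \<beta>: "\<beta> \<ge> 1" using assms base_exp by simp
  then have w: "w > 0" "w \<le> 1" "\<beta> * w^2 = 1" by (auto simp: w_def power_divide)
  have "exp (-A) \<le> f x powr \<beta>" if x: "\<bar>x\<bar> \<le> w" for x
  proof -
    have "\<beta> * x^2 \<le> \<beta> * w^2"
      using x \<beta> by (intro mult_left_mono) (auto simp flip: abs_le_square_iff)
    then have "-A \<le> \<beta> * (-A*x^2)" using A_pos w by (simp add: algebra_simps)
    also have "\<dots> \<le> \<beta> * ln (f x)" using ln_f_ge[of x] x w \<beta> by (intro mult_left_mono) auto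
    finally show ?thesis using f_pos[of x] by (simp add: powr_def mult.commute)
  qed
  then have "ennreal (exp (-A)) * indicator {-w..w} x \<le> ennreal (f x powr \<beta>)" for x
    by (auto simp: abs_le_iff intro: ennreal_leI split: split_indicator)
  then have "(\<integral>\<^sup>+x. ennreal (exp (-A)) * indicator {-w..w} x \<partial>lborel) \<le> ennreal (Nf f \<beta>)"
    unfolding Nf_eq_nn_integral[OF assms, symmetric] by (rule nn_integral_mono)
  moreover have "(\<integral>\<^sup>+x. ennreal (exp (-A)) * indicator {-w..w} x \<partial>lborel) = ennreal (2 * exp (-A) / sqrt \<beta>)"
    using w by (simp add: nn_integral_cmult_indicator w_def flip: ennreal_mult)
  ultimately show ?thesis using Nf_nonneg by (simp add: ennreal_le_iff)
qed

lemma Nf_pos: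
  assumes "\<beta> \<ge> base_exp" shows "Nf f \<beta> > 0"
proof -
  have "0 < 2 * exp (-A) / sqrt \<beta>" using assms base_exp by simp
  also have "\<dots> \<le> Nf f \<beta>" using assms by (rule Nf_ge)
  finally show ?thesis .
qed

lemma prob_space_tempered:
  assumes "\<beta> \<ge> base_exp" shows "prob_space (tempered f \<beta>)"
proof (rule prob_spaceI)
  have "emeasure (tempered f \<beta>) (space (tempered f \<beta>))
      = (\<integral>\<^sup>+x. ennreal (1 / Nf f \<beta>) * ennreal (f x powr \<beta>) \<partial>lborel)"
    using Nf_pos[OF assms] by (subst emeasure_density) (auto intro!: nn_integral_cong simp: field_simps simp flip: ennreal_mult)
  also have "\<dots> = 1"
    using Nf_pos[OF assms]
    by (subst nn_integral_cmult) (auto simp: Nf_eq_nn_integral[OF assms] simp flip: ennreal_mult)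
  finally show "emeasure (tempered f \<beta>) (space (tempered f \<beta>)) = 1" .
qed

text \<open>The constant \<open>27/(-ln q)\<^sup>3\<close> bounds \<open>\<beta>\<^sup>3 q\<^sup>\<beta>\<close>: the off-peak part decays exponentially,
  so it is absorbed into the \<open>O(\<beta>\<^sup>-\<^sup>3)\<close> of the Gaussian part.\<close>
lemma fifth_moment_numerator_le:
  assumes "\<beta> \<ge> base_exp"
  defines "q \<equiv> off_peak_bound"
  shows "2/(a*\<beta>)^3 + q powr (\<beta>-base_exp) * base_moment
           \<le> (2/a^3 + q powr (-base_exp) * base_moment * (27 / (-ln q)^3)) / \<beta>^3"
proof -
  have \<beta>: "\<beta> \<ge> 1" using assms base_exp by simp
  have q: "0 < q" "q < 1" "-ln q > 0" using off_peak_bound by (auto simp: q_def)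
  have "q powr (\<beta>-base_exp) = q powr (-base_exp) * exp (-(-ln q)*\<beta>)"
    using q by (simp add: powr_def algebra_simps flip: exp_add)
  then have "\<beta>^3 * (q powr (\<beta>-base_exp) * base_moment)
      = q powr (-base_exp) * base_moment * (\<beta>^3 * exp (-(-ln q)*\<beta>))"
    by simp
  also have "\<dots> \<le> q powr (-base_exp) * base_moment * (27 / (-ln q)^3)"
    using pow3_mult_exp_le[OF q(3), of \<beta>] \<beta> base_moment_nonneg by (intro mult_left_mono) auto
  finally have "\<beta>^3 * (q powr (\<beta>-base_exp) * base_moment)
      \<le> q powr (-base_exp) * base_moment * (27 / (-ln q)^3)" .
  moreover have "\<beta>^3 * (2/(a*\<beta>)^3) = 2/a^3" using a_pos \<beta> by (simp add: field_simps)
  ultimately have "\<beta>^3 * (2/(a*\<beta>)^3 + q powr (\<beta>-base_exp) * base_moment)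
      \<le> 2/a^3 + q powr (-base_exp) * base_moment * (27 / (-ln q)^3)"
    by (simp add: distrib_left)
  then show ?thesis using \<beta> by (simp add: field_simps)
qed

definition moment_const :: real where
  "moment_const = (2/a^3 + off_peak_bound powr (-base_exp) * base_moment * (27 / (-ln off_peak_bound)^3))
                    * exp A / 2"

lemma moment_const_nonneg: "moment_const \<ge> 0"
proof -
  have "-ln off_peak_bound > 0" using off_peak_bound by simp
  then show ?thesis
    unfolding moment_const_def using a_pos base_moment_nonneg
    by (intro mult_nonneg_nonneg add_nonneg_nonneg divide_nonneg_pos) auto
qed

lemma tempered_fifth_moment_le:
  assumes \<beta>: "\<beta> \<ge> base_exp"
  shows "(\<integral>\<^sup>+x. ennreal (\<bar>x\<bar>^5) \<partial>tempered f \<beta>) \<le> ennreal (moment_const / (\<beta>^2 * sqrt \<beta>))"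
proof -
  let ?q = off_peak_bound
  define C1 where "C1 = 2/a^3 + ?q powr (-base_exp) * base_moment * (27 / (-ln ?q)^3)"
  define num where "num = 2/(a*\<beta>)^3 + ?q powr (\<beta>-base_exp) * base_moment"
  have num: "0 \<le> num" "num \<le> C1 / \<beta>^3"
    using \<beta> base_exp a_pos base_moment_nonneg fifth_moment_numerator_le[OF \<beta>]
    by (auto simp: num_def C1_def)
  have N: "0 < Nf f \<beta>" "2 * exp (-A) / sqrt \<beta> \<le> Nf f \<beta>" using Nf_pos Nf_ge \<beta> by auto
  have "(\<integral>\<^sup>+x. ennreal (\<bar>x\<bar>^5) \<partial>tempered f \<beta>)
      = (\<integral>\<^sup>+x. ennreal (1 / Nf f \<beta>) * ennreal (f x powr \<beta> * \<bar>x\<bar>^5) \<partial>lborel)"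
    using N by (subst nn_integral_density) (auto intro!: nn_integral_cong simp: field_simps simp flip: ennreal_mult)
  also have "\<dots> \<le> ennreal (1 / Nf f \<beta>) * ennreal num"
    unfolding num_def using nn_integral_f_powr_abs_pow5_le[OF \<beta>]
    by (subst nn_integral_cmult) (auto intro: mult_left_mono)
  also have "\<dots> = ennreal (num / Nf f \<beta>)" using N num by (simp flip: ennreal_mult)
  also have "num / Nf f \<beta> \<le> (C1 / \<beta>^3) / (2 * exp (-A) / sqrt \<beta>)"
    using num N \<beta> base_exp by (intro frac_le) auto
  also have "\<dots> = moment_const / (\<beta>^2 * sqrt \<beta>)"
  proof -
    have "sqrt \<beta> * sqrt \<beta> = \<beta>" using \<beta> base_exp by simp
    moreover have "moment_const = C1 * exp A / 2" by (simp add: moment_const_def C1_def)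
    ultimately show ?thesis
      using \<beta> base_exp by (simp add: exp_minus field_simps power3_eq_cube power2_eq_square)
  qed
  finally show ?thesis by (simp add: ennreal_leI)
qed

lemma measure_abs_sum_Rem_gt_le:
  assumes "H \<noteq> 0" and "c \<ge> 0" and Rem_le: "\<And>z. \<bar>Rem f z\<bar> \<le> c * \<bar>z\<bar>^5" and "\<epsilon> > 0"
    and \<beta>: "\<beta> \<ge> base_exp"
  shows "measure (joint_law f H \<beta> d)
           {p \<in> space (joint_law f H \<beta> d). \<bar>\<beta> * (\<Sum>i<d. Rem f (snd p i) - Rem f (fst p i))\<bar> > \<epsilon>}
         \<le> c * real d * (moment_const + 8 * sqrt (2/pi) / sqrt \<bar>H\<bar> ^ 5) / (\<epsilon> * \<beta> * sqrt \<beta>)"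
proof -
  have "\<beta> > 0" using \<beta> base_exp by simp
  define \<sigma> where "\<sigma> = 1 / sqrt (\<beta> * \<bar>H\<bar>)"
  have \<sigma>: "\<sigma> > 0" using \<open>\<beta> > 0\<close> \<open>H \<noteq> 0\<close> by (simp add: \<sigma>_def)
  have "sqrt \<beta> ^ 5 = \<beta>^2 * sqrt \<beta>" using \<open>\<beta> > 0\<close> by (simp add: eval_nat_numeral)
  then have gauss_moment: "8 * \<sigma>^5 * sqrt (2/pi) = (8 * sqrt (2/pi) / sqrt \<bar>H\<bar> ^ 5) / (\<beta>^2 * sqrt \<beta>)"
    using \<open>\<beta> > 0\<close> \<open>H \<noteq> 0\<close> by (simp add: \<sigma>_def real_sqrt_mult power_mult_distrib field_simps)
  have "measure (joint_law f H \<beta> d)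
           {p \<in> space (joint_law f H \<beta> d). \<bar>\<beta> * (\<Sum>i<d. Rem f (snd p i) - Rem f (fst p i))\<bar> > \<epsilon>}
         \<le> \<beta> * c * real d * (moment_const / (\<beta>^2 * sqrt \<beta>) + 8 * \<sigma>^5 * sqrt (2/pi)) / \<epsilon>"
    unfolding joint_law_def \<sigma>_def[symmetric]
    using prob_space_tempered[OF \<beta>] prob_space_normal_density[OF \<sigma>] tempered_fifth_moment_le[OF \<beta>]
      normal_fifth_abs_moment[OF \<sigma>] moment_const_nonneg \<open>\<beta> > 0\<close> \<open>c \<ge> 0\<close> \<open>\<epsilon> > 0\<close> \<sigma>
    by (intro measure_abs_sum_diff_gt_le Rem_le) auto
  also have "\<dots> = c * real d * (moment_const + 8 * sqrt (2/pi) / sqrt \<bar>H\<bar> ^ 5) / (\<epsilon> * \<beta> * sqrt \<beta>)"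
    using \<open>\<beta> > 0\<close> \<open>\<epsilon> > 0\<close> unfolding gauss_moment by (simp add: field_simps power2_eq_square)
  finally show ?thesis .
qed

theorem tendsto_measure_abs_sum_Rem_gt:
  assumes "H \<noteq> 0" and "l > 0" and "c \<ge> 0" and Rem_le: "\<And>z. \<bar>Rem f z\<bar> \<le> c * \<bar>z\<bar>^5" and "\<epsilon> > 0"
  shows "((\<lambda>d::nat. measure (joint_law f H (l * real d) d)
           {p \<in> space (joint_law f H (l * real d) d).
              \<bar>(l * real d) * (\<Sum>i<d. Rem f (snd p i) - Rem f (fst p i))\<bar> > \<epsilon>}) \<longlongrightarrow> 0) sequentially"
proof -
  let ?P = "\<lambda>d::nat. measure (joint_law f H (l * real d) d)
           {p \<in> space (joint_law f H (l * real d) d).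
              \<bar>(l * real d) * (\<Sum>i<d. Rem f (snd p i) - Rem f (fst p i))\<bar> > \<epsilon>}"
  define Z where "Z = moment_const + 8 * sqrt (2/pi) / sqrt \<bar>H\<bar> ^ 5"
  define B where "B = c * Z / (\<epsilon> * l * sqrt l)"
  have P_le: "?P d \<le> B / sqrt (real d)" if d: "d \<ge> nat \<lceil>base_exp / l\<rceil> + 1" for d
  proof -
    have "real d > 0" and "base_exp / l \<le> real d" using d by linarith+
    then have \<beta>: "l * real d \<ge> base_exp" using \<open>l > 0\<close> by (simp add: field_simps)
    have "?P d \<le> c * real d * Z / (\<epsilon> * (l * real d) * sqrt (l * real d))"
      unfolding Z_def
      by (rule measure_abs_sum_Rem_gt_le[OF assms(1,3) Rem_le assms(5) \<beta>])
    also have "\<dots> = B / sqrt (real d)"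
      using \<open>l > 0\<close> \<open>real d > 0\<close> by (simp add: B_def real_sqrt_mult field_simps)
    finally show ?thesis .
  qed
  have "\<forall>\<^sub>F d in sequentially. 0 \<le> ?P d" by simp
  moreover have "\<forall>\<^sub>F d in sequentially. ?P d \<le> B / sqrt (real d)"
    using P_le by (rule eventually_sequentiallyI)
  moreover have "((\<lambda>d::nat. B / sqrt (real d)) \<longlongrightarrow> 0) sequentially" by real_asymp
  ultimately show ?thesis
    by (rule tendsto_sandwich[OF _ _ tendsto_const])
qed

end

theorem lemma3:
  fixes f :: "real \<Rightarrow> real" and l L :: real
  defines "h \<equiv> (\<lambda>x. ln (f x))"
  defines "H \<equiv> (deriv ^^ 2) (\<lambda>x. ln (f x)) 0"
  assumes f_pos: "\<And>x. f x > 0"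
    and f_C5: "Cn 5 f"
    and f0: "f 0 = 1"
    and f'0: "deriv f 0 = 0"
    and unique_max: "\<And>x. x \<noteq> 0 \<Longrightarrow> f x < f 0"
    and H_neg: "H < 0"
    and L_pos: "L > 0"
    and h5_bound: "\<And>x. \<bar>(deriv ^^ 5) h x\<bar> < L"
    and tails_cap: "\<exists>\<gamma> M K. \<gamma> > 0 \<and> M > 0 \<and> K > 0
          \<and> (\<exists>K'<K. \<forall>x. \<bar>x\<bar> > M \<longrightarrow> f x * \<bar>x\<bar> powr \<gamma> \<le> K')
          \<and> (\<exists>\<delta>\<^sub>2. 0 < \<delta>\<^sub>2 \<and> \<delta>\<^sub>2 < M
               \<and> (\<forall>x. \<bar>x\<bar> < \<delta>\<^sub>2 \<longrightarrow> f x \<le> exp (- (x\<^sup>2 * \<bar>H\<bar> / 4)))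
               \<and> (\<forall>x. \<delta>\<^sub>2 \<le> \<bar>x\<bar> \<and> \<bar>x\<bar> \<le> M \<longrightarrow> f x \<le> exp (- (\<delta>\<^sub>2\<^sup>2 * \<bar>H\<bar> / 4))))"
    and l_pos: "l > 0"
  shows "\<forall>\<epsilon>>0. ((\<lambda>d::nat.
            measure (joint_law f H (l * real d) d)
              {p \<in> space (joint_law f H (l * real d) d).
                 \<bar>(l * real d) * (\<Sum>i<d. Rem f (snd p i) - Rem f (fst p i))\<bar> > \<epsilon>})
          \<longlongrightarrow> 0) sequentially"
proof -
  obtain \<gamma> M K' \<delta>\<^sub>2 where "\<gamma> > 0" "M > 0" and tail: "\<forall>x. \<bar>x\<bar> > M \<longrightarrow> f x * \<bar>x\<bar> powr \<gamma> \<le> K'"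
    and "0 < \<delta>\<^sub>2" and gauss: "\<forall>x. \<bar>x\<bar> < \<delta>\<^sub>2 \<longrightarrow> f x \<le> exp (- (x\<^sup>2 * \<bar>H\<bar> / 4))"
    using tails_cap by blast
  have Rem_le: "\<bar>Rem f z\<bar> \<le> L/120 * \<bar>z\<bar>^5" for z
    using abs_Rem_le[OF f_pos f_C5 f'0] h5_bound unfolding h_def by (simp add: less_imp_le)
  obtain A where "A > 0" and ln_f_ge: "\<And>x. \<bar>x\<bar> \<le> 1 \<Longrightarrow> -A * x^2 \<le> ln (f x)"
    using ln_ge_neg_quadratic[where f=f and c="L/120"] f0 Rem_le L_pos by auto
  have "peaked_density f A (\<bar>H\<bar>/4) \<delta>\<^sub>2 M (max K' 1) \<gamma>"
  proof
    show "continuous_on UNIV f"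
      using derivs_upto_imp_continuous[of 4 f] Cn_imp_derivs_upto[OF f_C5] by (simp add: numeral_eq_Suc)
    show "\<bar>x\<bar> < \<delta>\<^sub>2 \<Longrightarrow> f x \<le> exp (-(\<bar>H\<bar>/4)*x^2)" for x
      using gauss by (simp add: algebra_simps)
    show "\<bar>x\<bar> > M \<Longrightarrow> f x * \<bar>x\<bar> powr \<gamma> \<le> max K' 1" for x
      using tail by (meson max.coboundedI1)
  qed (use f_pos f0 unique_max \<open>A > 0\<close> ln_f_ge H_neg \<open>0 < \<delta>\<^sub>2\<close> \<open>\<gamma> > 0\<close> \<open>M > 0\<close> in auto)
  then show ?thesis
    using peaked_density.tendsto_measure_abs_sum_Rem_gt[OF _ _ l_pos _ Rem_le] H_neg L_pos by auto
qed

end
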